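(* Let $B$ be an affine domain over an infinite field $k$. Let $f \in B$ be such that $f - \lambda$ is a prime element of $B$ for infinitely many $\lambda \in k$. Let $\phi : B \to B[U]$ be a non-trivial exponential map on $B$ such that $f \in B^{\phi}$. Then there exists $\beta \in k$ such that $f-\beta$ is a prime element of $B$ and $\phi$ induces a non-trivial exponential map on $B/(f-\beta)B$, i.e. the composite $B \xrightarrow{\phi} B[U] \to (B/(f-\beta)B)[U]$ factors through a map $\phi_1 : B/(f-\beta)B \to (B/(f-\beta)B)[U]$ which is a non-trivial exponential map.
   Context: For a $k$-algebra $A$ and an indeterminate $U$ over $A$, a $k$-algebra homomorphism $\phi = \phi_U : A \to A[U]$ is an exponential map on $A$ if (i) $\varepsilon_0 \circ \phi_U$ is the identity of $A$, where $\varepsilon_0 : A[U]\to A$ is evaluation at $U=0$; and (ii) $\phi_V \circ \phi_U = \phi_{V+U}$, where $\phi_V: A \to A[V]$ (same map with $U$ replaced by another indeterminate $V$) is extended to $A[U] \to A[V,U]$ by $\phi_V(U)=U$. The ring of invariants is $A^{\phi} = \{a\in A : \phi(a) = a\}$, and $\phi$ is non-trivial if $A^\phi \neq A$. *)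

theory Defs
  imports "HOL-Algebra.Algebra"
begin

text \<open>Univariate polynomial rings are HOL-Algebra's UP R; the two-variable ring A[V,U]
  is represented as (A[V])[U] = UP (UP R), the outer variable being U.\<close>

definition indet_U :: "('a, 'm) ring_scheme \<Rightarrow> nat \<Rightarrow> (nat \<Rightarrow> 'a)" where
  "indet_U R = monom (UP (UP R)) \<one>\<^bsub>UP R\<^esub> 1"

definition indet_V :: "('a, 'm) ring_scheme \<Rightarrow> nat \<Rightarrow> (nat \<Rightarrow> 'a)" where
  "indet_V R = monom (UP (UP R)) (monom (UP R) \<one>\<^bsub>R\<^esub> 1) 0"

definition const2 :: "('a, 'm) ring_scheme \<Rightarrow> 'a \<Rightarrow> nat \<Rightarrow> (nat \<Rightarrow> 'a)" where
  "const2 R c = monom (UP (UP R)) (monom (UP R) c 0) 0"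

text \<open>An exponential map on the K-algebra R (K a subfield of R):
  a K-algebra homomorphism phi : R \<rightarrow> R[U] such that (i) evaluation at U = 0 after phi is
  the identity and (ii) phi_V \<circ> phi_U = phi_{V+U}, where phi_V acts on R[U] coefficientwise
  (fixing U), and phi_{V+U}(a) is phi(a) with U replaced by V+U.\<close>
definition exp_map :: "('a, 'm) ring_scheme \<Rightarrow> 'a set \<Rightarrow> ('a \<Rightarrow> nat \<Rightarrow> 'a) \<Rightarrow> bool" where
  "exp_map R K \<phi> \<longleftrightarrow>
     \<phi> \<in> ring_hom R (UP R) \<and>
     (\<forall>c\<in>K. \<phi> c = monom (UP R) c 0) \<and>
     (\<forall>a\<in>carrier R. coeff (UP R) (\<phi> a) 0 = a) \<and>
     (\<forall>a\<in>carrier R.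
        (\<lambda>n. \<phi> (coeff (UP R) (\<phi> a) n))
        = eval R (UP (UP R)) (const2 R) (indet_V R \<oplus>\<^bsub>UP (UP R)\<^esub> indet_U R) (\<phi> a))"

definition invariants :: "('a, 'm) ring_scheme \<Rightarrow> ('a \<Rightarrow> nat \<Rightarrow> 'a) \<Rightarrow> 'a set" where
  "invariants R \<phi> = {a \<in> carrier R. \<phi> a = monom (UP R) a 0}"

definition nontrivial_exp :: "('a, 'm) ring_scheme \<Rightarrow> ('a \<Rightarrow> nat \<Rightarrow> 'a) \<Rightarrow> bool" where
  "nontrivial_exp R \<phi> \<longleftrightarrow> invariants R \<phi> \<noteq> carrier R"

definition affine_domain :: "('a, 'm) ring_scheme \<Rightarrow> 'a set \<Rightarrow> bool" where
  "affine_domain R K \<longleftrightarrow> domain R \<and> subfield K R \<and>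
     (\<exists>S. finite S \<and> S \<subseteq> carrier R \<and> generate_ring R (K \<union> S) = carrier R)"

end

theory Submission
  imports Defs
begin

text \<open>
  An affine domain is Noetherian: by Hilbert's basis theorem (in its minimal-degree form) Noetherianity
  passes from a subring \<open>A\<close> to every simple extension \<open>A[s]\<close>, and one adjoins the finitely many
  generators to the field \<open>K\<close>.

  Since \<open>\<phi>\<close> is non-trivial, some \<open>b\<close> has a coefficient \<open>c \<noteq> 0\<close> of \<open>U\<^sup>n\<close> in \<open>\<phi>(b)\<close> with \<open>n > 0\<close>.
  The elements \<open>f - \<lambda>\<close> for distinct \<open>\<lambda> \<in> K\<close> never divide each other, so each prime among them
  that divides \<open>c\<close> is associate to a different irreducible factor of \<open>c\<close>; in a Noetherian domain
  \<open>c\<close> has a factorisation into irreducibles, hence only finitely many such \<open>\<lambda>\<close> exist, and we can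
  pick \<open>\<beta>\<close> with \<open>f - \<beta>\<close> prime and not dividing \<open>c\<close>.  As \<open>f - \<beta>\<close> is invariant,
  \<open>\<phi>((f - \<beta>)B) \<subseteq> (f - \<beta>)B[U]\<close>, so \<open>\<phi>\<close> descends to an exponential map of \<open>B/(f - \<beta>)B\<close>,
  which moves the class of \<open>b\<close> because \<open>c \<notin> (f - \<beta>)B\<close>.
\<close>

section \<open>Affine domains are Noetherian\<close>

lemma (in noetherian_ring) ideal_seq_stabilizes:
  assumes I: "\<And>n. ideal (I n) R" and mono: "\<And>n. I n \<subseteq> I (Suc n)"
  shows "\<exists>m. \<forall>n. I n \<subseteq> I m"
proof -
  have "subset.chain {I. ideal I R} (range I)"
  proof -
    have "I i \<subseteq> I j \<or> I j \<subseteq> I i" for i j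
      using lift_Suc_mono_le[of I, OF mono] nle_le by metis
    then show ?thesis unfolding pred_on.chain_def using I by blast
  qed
  then have "\<Union>(range I) \<in> range I" by (intro ideal_chain_is_trivial) auto
  then obtain m where "\<Union>(range I) = I m" by blast
  then show ?thesis by blast
qed

lemma (in field) field_noetherian: "noetherian_ring R"
proof (rule noetherian_ringI)
  fix I assume "ideal I R"
  then have "I = {\<zero>} \<or> I = carrier R" using all_ideals by blast
  then show "\<exists>A\<subseteq>carrier R. finite A \<and> I = Idl A"
    using genideal_zero genideal_one by blast
qed

lemma noetherian_ring_surj_hom_image:
  assumes h: "ring_hom_ring P S h" and surj: "h ` carrier P = carrier S" and N: "noetherian_ring P"
  shows "noetherian_ring S"
proof -
  interpret h: ring_hom_ring P S h using h .
  interpret P: noetherian_ring P using N .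
  show ?thesis
  proof (rule h.S.noetherian_ringI)
    fix J assume J: "ideal J S"
    obtain F where F: "F \<subseteq> carrier P" "finite F" "{r \<in> carrier P. h r \<in> J} = Idl\<^bsub>P\<^esub> F"
      using P.finetely_gen[OF h.ideal_vimage[OF J]] by blast
    have hF: "h ` F \<subseteq> carrier S" using F(1) by auto
    have "J = Idl\<^bsub>S\<^esub> (h ` F)"
    proof
      show "Idl\<^bsub>S\<^esub> (h ` F) \<subseteq> J"
        using F(3) h.R.genideal_self[OF F(1)] by (intro h.S.genideal_minimal[OF J]) blast
    next
      have preim: "Idl\<^bsub>P\<^esub> F \<subseteq> {r \<in> carrier P. h r \<in> Idl\<^bsub>S\<^esub> (h ` F)}"
        using F(1) h.S.genideal_self[OF hF]
        by (intro h.R.genideal_minimal[OF h.ideal_vimage[OF h.S.genideal_ideal[OF hF]]]) blast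
      show "J \<subseteq> Idl\<^bsub>S\<^esub> (h ` F)"
      proof
        fix y assume "y \<in> J"
        then obtain x where "x \<in> carrier P" "y = h x" using surj ideal.Icarr[OF J] by (metis imageE)
        moreover have "x \<in> Idl\<^bsub>P\<^esub> F" using F(3) \<open>y \<in> J\<close> calculation by blast
        ultimately show "y \<in> Idl\<^bsub>S\<^esub> (h ` F)" using preim by blast
      qed
    qed
    then show "\<exists>A\<subseteq>carrier S. finite A \<and> J = Idl\<^bsub>S\<^esub> A" using hF F(2) by blast
  qed
qed

lemma (in cring) subring_idealI:
  assumes A: "subring A R" and T: "T \<subseteq> A" "\<zero> \<in> T"
    and add: "\<And>x y. x \<in> T \<Longrightarrow> y \<in> T \<Longrightarrow> x \<oplus> y \<in> T"
    and smult: "\<And>c x. c \<in> A \<Longrightarrow> x \<in> T \<Longrightarrow> c \<otimes> x \<in> T"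
  shows "ideal T (R\<lparr>carrier := A\<rparr>)"
proof -
  interpret S: ring "R\<lparr>carrier := A\<rparr>" using subring_is_ring[OF A] .
  have AR: "A \<subseteq> carrier R" using subringE(1)[OF A] .
  have neg: "\<ominus>\<^bsub>R\<lparr>carrier := A\<rparr>\<^esub> x \<in> T" if x: "x \<in> T" for x
  proof -
    have xA: "x \<in> A" using x T by auto
    have "\<ominus>\<^bsub>R\<lparr>carrier := A\<rparr>\<^esub> x = \<ominus>\<^bsub>R\<lparr>carrier := A\<rparr>\<^esub> (\<one> \<otimes> x)"
      using xA AR by auto
    also have "\<dots> = (\<ominus>\<^bsub>R\<lparr>carrier := A\<rparr>\<^esub> \<one>) \<otimes> x"
      using xA S.l_minus[OF S.one_closed, of x] by simp
    finally have "\<ominus>\<^bsub>R\<lparr>carrier := A\<rparr>\<^esub> x = (\<ominus>\<^bsub>R\<lparr>carrier := A\<rparr>\<^esub> \<one>) \<otimes> x" .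
    then show ?thesis using smult[of "\<ominus>\<^bsub>R\<lparr>carrier := A\<rparr>\<^esub> \<one>" x] x S.a_inv_closed[OF S.one_closed]
      by simp
  qed
  show ?thesis
  proof (rule idealI[OF S.ring_axioms])
    show "subgroup T (add_monoid (R\<lparr>carrier := A\<rparr>))"
      using T add neg[unfolded a_inv_def] by (auto intro!: subgroup.intro)
  next
    fix a x assume "a \<in> T" "x \<in> carrier (R\<lparr>carrier := A\<rparr>)"
    moreover have "a \<otimes> x = x \<otimes> a" using calculation T AR by (intro m_comm) auto
    ultimately show "x \<otimes>\<^bsub>R\<lparr>carrier := A\<rparr>\<^esub> a \<in> T" "a \<otimes>\<^bsub>R\<lparr>carrier := A\<rparr>\<^esub> x \<in> T"
      using smult by auto
  qed
qed

lemma (in ring) coeff_in_subset: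
  assumes "set p \<subseteq> A" "\<zero> \<in> A" shows "coeff p i \<in> A"
  using assms coeff_img(3)[of p] rangeI[of "coeff p" i] by auto

lemma (in domain) univ_poly_ideal_scalar_closed:
  assumes A: "subring A R" and J: "ideal J (A[X])" and c: "c \<in> A" "c \<noteq> \<zero>" and g: "g \<in> J"
  shows "map (\<lambda>b. c \<otimes> b) g \<in> J"
proof -
  have "[c] \<in> carrier (A[X])" using c const_is_polynomial univ_poly_carrier by blast
  then have "[c] \<otimes>\<^bsub>A[X]\<^esub> g \<in> J" using ideal.I_l_closed[OF J g] by blast
  moreover have "polynomial A g" using g ideal.Icarr[OF J] univ_poly_carrier by blast
  ultimately show ?thesis using poly_mult_const(1)[OF A] c by (simp add: univ_poly_mult)
qed

lemma (in domain) univ_poly_coeff_ideal: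
  assumes A: "subring A R" and J: "ideal J (A[X])"
  shows "ideal {coeff g d | g. g \<in> J \<and> degree g \<le> d} (R\<lparr>carrier := A\<rparr>)"
    (is "ideal ?T _")
proof -
  have AR: "A \<subseteq> carrier R" using subringE(1)[OF A] .
  have JP: "\<And>g. g \<in> J \<Longrightarrow> polynomial A g" using ideal.Icarr[OF J] univ_poly_carrier by blast
  then have Jc: "\<And>g. g \<in> J \<Longrightarrow> set g \<subseteq> carrier R" using polynomial_in_carrier[OF A] by blast
  have zT: "\<zero> \<in> ?T" using additive_subgroup.zero_closed[OF ideal.axioms(1)[OF J]]
    by (force simp: univ_poly_zero)
  show ?thesis
  proof (rule subring_idealI[OF A _ zT])
    show "?T \<subseteq> A"
      using JP polynomial_incl coeff_in_subset subringE(2)[OF A] by blast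
  next
    fix x y assume "x \<in> ?T" "y \<in> ?T"
    then obtain g1 g2 where g: "g1 \<in> J" "degree g1 \<le> d" "x = coeff g1 d"
      "g2 \<in> J" "degree g2 \<le> d" "y = coeff g2 d" by blast
    have "g1 \<oplus>\<^bsub>A[X]\<^esub> g2 \<in> J"
      using g J by (simp add: ideal.axioms(1) additive_subgroup.a_closed)
    moreover have "degree (g1 \<oplus>\<^bsub>A[X]\<^esub> g2) \<le> d"
      using poly_add_degree[of g1 g2] g by (simp add: univ_poly_add)
    moreover have "coeff (g1 \<oplus>\<^bsub>A[X]\<^esub> g2) d = x \<oplus> y"
      using poly_add_coeff[OF Jc Jc] g by (simp add: univ_poly_add)
    ultimately show "x \<oplus> y \<in> ?T" by force
  next
    fix c x assume c: "c \<in> A" and "x \<in> ?T"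
    then obtain g where g: "g \<in> J" "degree g \<le> d" "x = coeff g d" by blast
    show "c \<otimes> x \<in> ?T"
    proof (cases "c = \<zero>")
      case True
      then show ?thesis using zT g Jc[of g] by simp
    next
      case False
      have "map (\<lambda>b. c \<otimes> b) g \<in> J" by (rule univ_poly_ideal_scalar_closed[OF A J c False g(1)])
      moreover have "coeff (map (\<lambda>b. c \<otimes> b) g) d = c \<otimes> x"
        using scalar_coeff[of c g] c AR g by auto
      ultimately show ?thesis using g(2) by (metis (mono_tags, lifting) length_map mem_Collect_eq)
    qed
  qed
qed

lemma (in domain) univ_poly_ideal_raise_degree:
  assumes A: "subring A R" and J: "ideal J (A[X])"
    and f: "f \<in> J" "f \<noteq> []" and d: "degree f \<le> d"
  shows "\<exists>g\<in>J. degree g = d \<and> coeff g d = lead_coeff f"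
proof -
  define mo where "mo = monom \<one> (d - degree f)"
  have fP: "polynomial A f" using f ideal.Icarr[OF J] univ_poly_carrier by blast
  have "\<one> \<in> A - {\<zero>}" using subringE(3)[OF A] one_not_zero by blast
  then have moP: "polynomial A mo" unfolding mo_def by (rule monom_is_polynomial[OF A])
  have mone: "mo \<noteq> []" unfolding mo_def monom_def by simp
  define g where "g = mo \<otimes>\<^bsub>A[X]\<^esub> f"
  have "g \<in> J" unfolding g_def using ideal.I_l_closed[OF J f(1)] moP univ_poly_carrier by blast
  moreover have "degree g = d" unfolding g_def univ_poly_mult
    using poly_mult_degree_eq[OF A moP fP] mone f(2) d by (simp add: mo_def monom_def)
  moreover have "g \<noteq> []"
    unfolding g_def univ_poly_mult using poly_mult_integral[OF A moP fP] mone f(2) by blast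
  moreover have "lead_coeff g = \<one> \<otimes> lead_coeff f"
    unfolding g_def univ_poly_mult
    using poly_mult_lead_coeff[OF A moP fP mone f(2)] by (simp add: mo_def monom_def)
  moreover have "lead_coeff f \<in> carrier R"
    using fP f(2) polynomial_in_carrier[OF A fP] by (cases f) auto
  ultimately show ?thesis using lead_coeff_simp by (metis l_one)
qed

lemma (in domain) univ_poly_lead_coeff_ideal_subset:
  assumes A: "subring A R" and G: "ideal G (A[X])"
    and F: "F \<subseteq> G" "\<And>f. f \<in> F \<Longrightarrow> f \<noteq> [] \<and> degree f \<le> d"
  shows "Idl\<^bsub>R\<lparr>carrier := A\<rparr>\<^esub> (lead_coeff ` F) \<subseteq> {coeff g d | g. g \<in> G \<and> degree g \<le> d}"
proof (rule ring.genideal_minimal[OF subring_is_ring[OF A] univ_poly_coeff_ideal[OF A G]])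
  show "lead_coeff ` F \<subseteq> {coeff g d | g. g \<in> G \<and> degree g \<le> d}"
  proof
    fix y assume "y \<in> lead_coeff ` F"
    then obtain f where "f \<in> F" "y = lead_coeff f" by blast
    then obtain g where "g \<in> G" "degree g = d" "coeff g d = y"
      using univ_poly_ideal_raise_degree[OF A G, of f d] F by blast
    then show "y \<in> {coeff g d | g. g \<in> G \<and> degree g \<le> d}" by force
  qed
qed

lemma (in domain) univ_poly_minus_degree_less:
  assumes A: "subring A R" and f: "f \<in> carrier (A[X])" "f \<noteq> []"
    and g: "g \<in> carrier (A[X])" "degree g \<le> degree f" "coeff g (degree f) = lead_coeff f"
    and h: "f \<ominus>\<^bsub>A[X]\<^esub> g \<noteq> []"
  shows "degree (f \<ominus>\<^bsub>A[X]\<^esub> g) < degree f"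
proof -
  interpret P: domain "A[X]" using univ_poly_is_domain[OF A] .
  let ?h = "f \<ominus>\<^bsub>A[X]\<^esub> g"
  have hP: "polynomial A ?h" using f g univ_poly_carrier by blast
  have cR: "set p \<subseteq> carrier R" if "p \<in> carrier (A[X])" for p
    using polynomial_in_carrier[OF A] that univ_poly_carrier by blast
  have "degree (\<ominus>\<^bsub>A[X]\<^esub> g) = degree g" by (rule univ_poly_a_inv_degree[OF A g(1)])
  then have hdeg: "degree ?h \<le> degree f"
    unfolding a_minus_def univ_poly_add using poly_add_degree[of f "\<ominus>\<^bsub>A[X]\<^esub> g"] g(2) by simp
  have hc: "?h \<in> carrier (A[X])" using f g by simp
  have "?h \<oplus>\<^bsub>A[X]\<^esub> g = f" using f(1) g(1) by algebra
  then have "poly_add ?h g = f" unfolding univ_poly_add .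
  then have "coeff f = (\<lambda>i. coeff ?h i \<oplus> coeff g i)"
    using poly_add_coeff[OF cR[OF hc] cR[OF g(1)]] by simp
  then have "lead_coeff f = coeff ?h (degree f) \<oplus> lead_coeff f"
    using lead_coeff_simp[OF f(2)] g(3) by metis
  moreover have "coeff ?h (degree f) \<in> carrier R" "lead_coeff f \<in> carrier R"
    using coeff_in_carrier[OF cR[OF hc]] coeff_in_carrier[OF cR[OF f(1)]] lead_coeff_simp[OF f(2)]
    by metis+
  ultimately have "coeff ?h (degree f) = \<zero>" by simp
  moreover have "coeff ?h (degree ?h) \<noteq> \<zero>"
    using hP h lead_coeff_simp[OF h] unfolding polynomial_def by simp
  ultimately show ?thesis using hdeg le_neq_implies_less by fastforce
qed

lemma (in domain) univ_poly_reduce_by_ideal: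
  assumes A: "subring A R" and G: "ideal G (A[X])" and f: "f \<in> carrier (A[X])" "f \<notin> G"
    and lead: "lead_coeff f \<in> {coeff g (degree f) | g. g \<in> G \<and> degree g \<le> degree f}"
  shows "\<exists>g\<in>G. f \<ominus>\<^bsub>A[X]\<^esub> g \<notin> G \<and> degree (f \<ominus>\<^bsub>A[X]\<^esub> g) < degree f"
proof -
  interpret P: domain "A[X]" using univ_poly_is_domain[OF A] .
  interpret G: ideal G "A[X]" using G .
  obtain g where g: "g \<in> G" "degree g \<le> degree f" "coeff g (degree f) = lead_coeff f"
    using lead by auto
  have gP: "g \<in> carrier (A[X])" using g(1) G.Icarr by blast
  have zero: "[] \<in> G" using G.zero_closed by (simp add: univ_poly_zero)
  have "f \<ominus>\<^bsub>A[X]\<^esub> g \<notin> G"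
  proof
    assume "f \<ominus>\<^bsub>A[X]\<^esub> g \<in> G"
    then have "(f \<ominus>\<^bsub>A[X]\<^esub> g) \<oplus>\<^bsub>A[X]\<^esub> g \<in> G" using g(1) by (rule G.a_closed)
    moreover have "(f \<ominus>\<^bsub>A[X]\<^esub> g) \<oplus>\<^bsub>A[X]\<^esub> g = f" using f(1) gP by algebra
    ultimately show False using f(2) by simp
  qed
  moreover have "f \<noteq> []" "f \<ominus>\<^bsub>A[X]\<^esub> g \<noteq> []" using f(2) calculation zero by auto
  ultimately show ?thesis
    using univ_poly_minus_degree_less[OF A f(1) _ gP g(2,3)] g(1) by blast
qed

lemma (in ring) non_finitely_generated_ideal_seq:
  fixes \<mu> :: "'a \<Rightarrow> nat"
  assumes J: "ideal J R" and nfg: "\<And>F. finite F \<Longrightarrow> F \<subseteq> J \<Longrightarrow> J \<noteq> Idl F"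
  obtains f :: "nat \<Rightarrow> 'a" where "\<And>n. f n \<in> J" "\<And>n. f n \<notin> Idl (f ` {..<n})"
    "\<And>n h. h \<in> J \<Longrightarrow> h \<notin> Idl (f ` {..<n}) \<Longrightarrow> \<mu> (f n) \<le> \<mu> h"
proof -
  define nx where "nx F = (ARG_MIN \<mu> g. g \<in> J - Idl F)" for F
  have nx: "nx F \<in> J - Idl F \<and> (\<forall>h \<in> J - Idl F. \<mu> (nx F) \<le> \<mu> h)" if "finite F" "F \<subseteq> J" for F
  proof -
    have "Idl F \<subseteq> J" "J \<noteq> Idl F" using genideal_minimal[OF J that(2)] nfg[OF that] .
    then obtain g where "g \<in> J - Idl F" by blast
    then show ?thesis unfolding nx_def using arg_min_nat_lemma[of "\<lambda>g. g \<in> J - Idl F"] by blast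
  qed
  define G where "G = rec_nat {} (\<lambda>_ F. insert (nx F) F)"
  define f where "f n = nx (G n)" for n
  have G: "G n = f ` {..<n}" for n
    by (induct n) (simp_all add: G_def f_def lessThan_Suc)
  have "finite (G n) \<and> G n \<subseteq> J" for n
    by (induct n) (use nx in \<open>auto simp: G_def\<close>)
  then show thesis using that[of f] nx G unfolding f_def by (metis Diff_iff)
qed

lemma (in domain) univ_poly_min_degree_seq_lead_coeff:
  fixes f :: "nat \<Rightarrow> 'a list"
  assumes A: "subring A R" and J: "ideal J (A[X])"
    and fJ: "\<And>n. f n \<in> J" and fnI: "\<And>n. f n \<notin> Idl\<^bsub>A[X]\<^esub> (f ` {..<n})"
    and fmin: "\<And>n h. h \<in> J \<Longrightarrow> h \<notin> Idl\<^bsub>A[X]\<^esub> (f ` {..<n}) \<Longrightarrow> degree (f n) \<le> degree h"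
  shows "lead_coeff (f m) \<in> A - Idl\<^bsub>R\<lparr>carrier := A\<rparr>\<^esub> (lead_coeff ` f ` {..<m})"
proof -
  interpret P: domain "A[X]" using univ_poly_is_domain[OF A] .
  interpret J: ideal J "A[X]" using J .
  define G where "G n = Idl\<^bsub>A[X]\<^esub> (f ` {..<n})" for n
  have fP: "f ` {..<n} \<subseteq> carrier (A[X])" for n using fJ J.Icarr by blast
  have Gid: "ideal (G n) (A[X])" for n unfolding G_def by (rule P.genideal_ideal[OF fP])
  have fne: "f n \<noteq> []" for n
    using fnI[of n] additive_subgroup.zero_closed[OF ideal.axioms(1)[OF Gid]]
    by (auto simp: G_def univ_poly_zero)
  have degmono: "degree (f i) \<le> degree (f n)" if "i \<le> n" for i n
  proof -
    have "G i \<subseteq> G n" unfolding G_def by (intro P.subset_Idl_subset[OF fP] image_mono) (simp add: that)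
    then show ?thesis using fmin[OF fJ[of n], of i] fnI[of n] unfolding G_def by blast
  qed
  have "lead_coeff (f m) \<in> A"
    using fJ[of m] J.Icarr polynomial_incl[of A "f m"] hd_in_set[OF fne[of m]]
    unfolding univ_poly_carrier by blast
  moreover have "lead_coeff (f m) \<notin> Idl\<^bsub>R\<lparr>carrier := A\<rparr>\<^esub> (lead_coeff ` f ` {..<m})"
  proof
    assume "lead_coeff (f m) \<in> Idl\<^bsub>R\<lparr>carrier := A\<rparr>\<^esub> (lead_coeff ` f ` {..<m})"
    moreover have "Idl\<^bsub>R\<lparr>carrier := A\<rparr>\<^esub> (lead_coeff ` f ` {..<m})
        \<subseteq> {coeff g (degree (f m)) | g. g \<in> G m \<and> degree g \<le> degree (f m)}"
      using P.genideal_self[OF fP] fne degmono unfolding G_def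
      by (intro univ_poly_lead_coeff_ideal_subset[OF A P.genideal_ideal[OF fP]]) auto
    ultimately obtain g where g: "g \<in> G m" "f m \<ominus>\<^bsub>A[X]\<^esub> g \<notin> G m"
        "degree (f m \<ominus>\<^bsub>A[X]\<^esub> g) < degree (f m)"
      using univ_poly_reduce_by_ideal[OF A Gid _ fnI[of m, folded G_def]] fJ[of m] J.Icarr by blast
    have "G m \<subseteq> J" unfolding G_def using fJ by (intro P.genideal_minimal[OF J]) blast
    then have "f m \<ominus>\<^bsub>A[X]\<^esub> g \<in> J" using fJ[of m] g(1) unfolding a_minus_def by blast
    then show False using fmin[of _ m] g(2,3) unfolding G_def by fastforce
  qed
  ultimately show ?thesis by blast
qed

lemma (in domain) noetherian_univ_poly:
  assumes A: "subring A R" and N: "noetherian_ring (R\<lparr>carrier := A\<rparr>)"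
  shows "noetherian_ring (A[X])"
proof -
  interpret P: domain "A[X]" using univ_poly_is_domain[OF A] .
  interpret S: noetherian_ring "R\<lparr>carrier := A\<rparr>" using N .
  show ?thesis
  proof (rule P.noetherian_ringI, rule ccontr)
    fix J assume J: "ideal J (A[X])" and nfg: "\<not> (\<exists>F \<subseteq> carrier (A[X]). finite F \<and> J = Idl\<^bsub>A[X]\<^esub> F)"
    have "J \<noteq> Idl\<^bsub>A[X]\<^esub> F" if "finite F" "F \<subseteq> J" for F
      using nfg that ideal.Icarr[OF J] by blast
    then obtain f :: "nat \<Rightarrow> 'a list" where "\<And>n. f n \<in> J" "\<And>n. f n \<notin> Idl\<^bsub>A[X]\<^esub> (f ` {..<n})"
      "\<And>n h. h \<in> J \<Longrightarrow> h \<notin> Idl\<^bsub>A[X]\<^esub> (f ` {..<n}) \<Longrightarrow> degree (f n) \<le> degree h"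
      using P.non_finitely_generated_ideal_seq[OF J, where \<mu> = degree] by blast
    note lead = univ_poly_min_degree_seq_lead_coeff[OF A J this]
    define L where "L n = Idl\<^bsub>R\<lparr>carrier := A\<rparr>\<^esub> (lead_coeff ` f ` {..<n})" for n
    have "ideal (L n) (R\<lparr>carrier := A\<rparr>)" for n
      unfolding L_def by (rule S.genideal_ideal) (use lead in auto)
    moreover have "L n \<subseteq> L (Suc n)" for n
      unfolding L_def by (rule S.subset_Idl_subset) (use lead in auto)
    ultimately obtain m where m: "\<And>n. L n \<subseteq> L m" using S.ideal_seq_stabilizes by blast
    have "lead_coeff ` f ` {..<Suc m} \<subseteq> carrier (R\<lparr>carrier := A\<rparr>)" using lead by auto
    then have "lead_coeff (f m) \<in> L (Suc m)" unfolding L_def using S.genideal_self by blast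
    then show False using m[of "Suc m"] lead[of m] unfolding L_def by blast
  qed
qed

lemma (in domain) noetherian_simple_extension:
  assumes A: "subring A R" and N: "noetherian_ring (R\<lparr>carrier := A\<rparr>)" and s: "s \<in> carrier R"
  shows "noetherian_ring (R\<lparr>carrier := simple_extension A s\<rparr>)"
proof -
  let ?E = "simple_extension A s"
  have img: "(\<lambda>p. eval p s) ` carrier (A[X]) = ?E"
    using simple_extension_as_eval_img[OF subringE(1)[OF A] s] by simp
  have "(\<lambda>p. eval p s) \<in> ring_hom (A[X]) (R\<lparr>carrier := ?E\<rparr>)"
    using eval_is_hom[OF A s] img unfolding ring_hom_def by auto
  then have "ring_hom_ring (A[X]) (R\<lparr>carrier := ?E\<rparr>) (\<lambda>p. eval p s)"
    by (rule ring_hom_ringI2[OF univ_poly_is_ring[OF A] subring_is_ring[OF simple_extension_is_subring[OF A s]]])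
  then show ?thesis
    using img noetherian_univ_poly[OF A N] by (intro noetherian_ring_surj_hom_image[of "A[X]" _ "\<lambda>p. eval p s"]) auto
qed

lemma (in domain) generate_ring_insert:
  assumes H: "H \<subseteq> carrier R" and s: "s \<in> carrier R"
  shows "generate_ring R (insert s H) = simple_extension (generate_ring R H) s"
proof -
  have "simple_extension (generate_ring R H) s =
        \<Inter>{K'. subring K' R \<and> generate_ring R H \<subseteq> K' \<and> s \<in> K'}"
    by (rule simple_extension_minimal[OF generate_ring_is_subring[OF H] s])
  also have "\<dots> = \<Inter>{K'. subring K' R \<and> insert s H \<subseteq> K'}"
  proof -
    have "(subring K' R \<and> generate_ring R H \<subseteq> K' \<and> s \<in> K') \<longleftrightarrow> (subring K' R \<and> insert s H \<subseteq> K')" for K'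
      using generate_ring_min_subring1[OF H, of K'] generate_ring.incl[of _ H R] by blast
    then show ?thesis by simp
  qed
  also have "\<dots> = generate_ring R (insert s H)"
    using generate_ring_min_subring2[of "insert s H"] H s by simp
  finally show ?thesis by simp
qed

lemma (in domain) noetherian_generate_ring:
  assumes K: "subfield K R" and S: "finite S" "S \<subseteq> carrier R"
  shows "noetherian_ring (R\<lparr>carrier := generate_ring R (K \<union> S)\<rparr>)"
  using S
proof (induct S rule: finite_induct)
  case empty
  have KR: "K \<subseteq> carrier R" using subringE(1)[OF subfieldE(1)[OF K]] .
  have "generate_ring R K = K"
    using generate_ring_min_subring1[OF KR subfieldE(1)[OF K]] generate_ring.incl[of _ K R] by blast
  then show ?case using field.field_noetherian[OF subfield_iff(2)[OF K]] by simp
next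
  case (insert s S)
  have H: "K \<union> S \<subseteq> carrier R" using insert subringE(1)[OF subfieldE(1)[OF K]] by auto
  have "K \<union> insert s S = insert s (K \<union> S)" by auto
  then have "generate_ring R (K \<union> insert s S) = simple_extension (generate_ring R (K \<union> S)) s"
    using generate_ring_insert[OF H] insert by simp
  then show ?case
    using noetherian_simple_extension[OF generate_ring_is_subring[OF H] insert(3)] insert(4) by simp
qed

lemma affine_domain_noetherian:
  assumes "affine_domain R K"
  shows "noetherian_domain R"
proof -
  interpret domain R using assms unfolding affine_domain_def by blast
  obtain S where "finite S" "S \<subseteq> carrier R" "generate_ring R (K \<union> S) = carrier R"
    and "subfield K R" using assms unfolding affine_domain_def by blast
  then have "noetherian_ring R" using noetherian_generate_ring by fastforce
  then show ?thesis by (simp add: noetherian_domain_def domain_axioms)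
qed

section \<open>Prime divisors of the form \<open>f - \<lambda>\<close>\<close>

lemma (in comm_monoid_cancel) prime_divides_irreducible_imp_associated:
  assumes p: "prime G p" "p \<in> carrier G" and u: "irreducible G u" and dvd: "p divides u"
  shows "p \<sim> u"
proof -
  have "u divides p"
  proof (rule ccontr)
    assume "\<not> u divides p"
    then have "properfactor G p u" by (rule properfactorI[OF dvd])
    then have "p \<in> Units G" using u p(2) unfolding irreducible_def by blast
    then show False using p(1) unfolding prime_def by blast
  qed
  with dvd show ?thesis by (rule associatedI)
qed

lemma (in domain) ring_prime_divides_wfactors:
  assumes fs: "set fs \<subseteq> carrier (mult_of R)" "wfactors (mult_of R) fs c" and c: "c \<in> carrier R" "c \<noteq> \<zero>"
    and p: "p \<in> carrier R" "ring_prime p" "p divides c"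
  shows "\<exists>i<length fs. p \<sim>\<^bsub>mult_of R\<^esub> fs ! i"
proof -
  have pm: "p \<in> carrier (mult_of R)" "prime (mult_of R) p" using p ring_primeE by auto
  have "foldr (\<otimes>) fs \<one> \<sim>\<^bsub>mult_of R\<^esub> c" using fs(2) unfolding wfactors_def by simp
  moreover have "p divides\<^bsub>mult_of R\<^esub> c" using p c by simp
  ultimately have "p divides\<^bsub>mult_of R\<^esub> foldr (\<otimes>) fs \<one>"
    using mult_of.divides_cong_r[OF _ mult_of.associated_sym pm(1)] by blast
  then obtain i where "i < length fs" "p divides\<^bsub>mult_of R\<^esub> fs ! i"
    using mult_of.multlist_prime_pos[OF pm(2,1) fs(1)] by auto
  moreover have "irreducible (mult_of R) (fs ! i)"
    using fs(2) nth_mem[OF calculation(1)] unfolding wfactors_def by blast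
  ultimately show ?thesis
    using mult_of.prime_divides_irreducible_imp_associated[OF pm(2,1)] by auto
qed

lemma (in noetherian_domain) finite_nondividing_prime_divisors:
  assumes c: "c \<in> carrier R" "c \<noteq> \<zero>"
    and P: "\<And>p. p \<in> P \<Longrightarrow> p \<in> carrier R \<and> ring_prime p \<and> p divides c"
    and P_nondividing: "\<And>p q. p \<in> P \<Longrightarrow> q \<in> P \<Longrightarrow> p divides q \<Longrightarrow> p = q"
  shows "finite P"
proof (cases "c \<in> Units R")
  case True
  have "p \<notin> P" for p
  proof
    assume "p \<in> P"
    then have "p \<in> Units R" "prime R p" using P True divides_unit ring_primeE(3) by blast+
    then show False unfolding prime_def by blast
  qed
  then have "P = {}" by blast
  then show ?thesis by simp
next
  case False
  then obtain fs where fs: "set fs \<subseteq> carrier (mult_of R)" "wfactors (mult_of R) fs c"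
    using factorization_property c by blast
  have "\<exists>i. i < length fs \<and> p \<sim>\<^bsub>mult_of R\<^esub> fs ! i" if "p \<in> P" for p
    using ring_prime_divides_wfactors[OF fs c] P[OF that] by blast
  then obtain idx where idx: "\<And>p. p \<in> P \<Longrightarrow> idx p < length fs \<and> p \<sim>\<^bsub>mult_of R\<^esub> fs ! idx p"
    by metis
  have "inj_on idx P"
  proof (rule inj_onI)
    fix p q assume pq: "p \<in> P" "q \<in> P" "idx p = idx q"
    have "fs ! idx p divides\<^bsub>mult_of R\<^esub> p"
      using associatedD[OF mult_of.associated_sym[OF conjunct2[OF idx[OF pq(1)]]]] .
    moreover have "q divides\<^bsub>mult_of R\<^esub> fs ! idx p"
      using associatedD[OF conjunct2[OF idx[OF pq(2)]]] pq(3) by simp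
    moreover have "q \<in> carrier (mult_of R)" using P[OF pq(2)] ring_primeE(1)[of q] by simp
    ultimately have "q divides\<^bsub>mult_of R\<^esub> p" using mult_of.divides_trans by blast
    then show "p = q" using P_nondividing[OF pq(2,1)] by simp
  qed
  then show "finite P" using inj_on_finite[of idx P "{..<length fs}"] idx by auto
qed

lemma (in domain) linear_divides_linear_imp_eq:
  assumes K: "subfield K R" and f: "f \<in> carrier R" and l: "l \<in> K" and m: "m \<in> K"
    and nonunit: "f \<ominus> l \<notin> Units R" and dvd: "(f \<ominus> l) divides (f \<ominus> m)"
  shows "l = m"
proof (rule ccontr)
  assume lm: "l \<noteq> m"
  have KR: "K \<subseteq> carrier R" using subringE(1)[OF subfieldE(1)[OF K]] .
  have lc: "l \<in> carrier R" and mc: "m \<in> carrier R" using l m KR by auto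
  obtain t where t: "t \<in> carrier R" "f \<ominus> m = (f \<ominus> l) \<otimes> t" using dvd unfolding factor_def by blast
  have "l \<ominus> m \<in> K - {\<zero>}"
    using l m lm lc mc subringE(5,7)[OF subfieldE(1)[OF K]] r_right_minus_eq
    unfolding a_minus_def by auto
  then obtain u where u: "u \<in> carrier R" "(l \<ominus> m) \<otimes> u = \<one>"
    using subfield_m_inv[OF K] KR by blast
  have "(f \<ominus> l) \<otimes> (t \<ominus> \<one>) = (f \<ominus> l) \<otimes> t \<ominus> (f \<ominus> l)" using f lc t by algebra
  also have "\<dots> = (f \<ominus> m) \<ominus> (f \<ominus> l)" using t by simp
  also have "\<dots> = l \<ominus> m" using f lc mc by algebra
  finally have "(f \<ominus> l) \<otimes> ((t \<ominus> \<one>) \<otimes> u) = \<one>"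
    using u f lc t by (simp add: m_assoc[symmetric])
  then have "f \<ominus> l \<in> Units R"
    using f lc t u unfolding Units_def by (auto intro!: bexI[of _ "(t \<ominus> \<one>) \<otimes> u"] simp: m_comm)
  then show False using nonunit by blast
qed

lemma (in noetherian_domain) finite_linear_prime_divisors:
  assumes K: "subfield K R" and f: "f \<in> carrier R" and c: "c \<in> carrier R" "c \<noteq> \<zero>"
  shows "finite {l \<in> K. ring_prime (f \<ominus> l) \<and> (f \<ominus> l) divides c}" (is "finite ?S")
proof -
  have KR: "K \<subseteq> carrier R" using subringE(1)[OF subfieldE(1)[OF K]] .
  have eq: "l = m" if "l \<in> ?S" "m \<in> ?S" "(f \<ominus> l) divides (f \<ominus> m)" for l m
    using linear_divides_linear_imp_eq[OF K f _ _ _ that(3)] that ring_primeE(3) f KR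
    unfolding prime_def by blast
  have "finite ((\<lambda>l. f \<ominus> l) ` ?S)"
  proof (rule finite_nondividing_prime_divisors[OF c])
    fix p assume "p \<in> (\<lambda>l. f \<ominus> l) ` ?S"
    then show "p \<in> carrier R \<and> ring_prime p \<and> p divides c" using f KR by auto
  next
    fix p q assume "p \<in> (\<lambda>l. f \<ominus> l) ` ?S" "q \<in> (\<lambda>l. f \<ominus> l) ` ?S" "p divides q"
    then show "p = q" using eq by blast
  qed
  moreover have "inj_on (\<lambda>l. f \<ominus> l) ?S"
  proof (rule inj_onI)
    fix l m assume lm: "l \<in> ?S" "m \<in> ?S" "f \<ominus> l = f \<ominus> m"
    have "(f \<ominus> l) divides (f \<ominus> l)" using lm(1) f KR by (intro divides_refl) auto
    then show "l = m" using eq[OF lm(1,2)] lm(3) by simp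
  qed
  ultimately show ?thesis using finite_imageD by blast
qed

section \<open>Coefficientwise maps of univariate polynomials\<close>

definition UP_map :: "('a \<Rightarrow> 'b) \<Rightarrow> (nat \<Rightarrow> 'a) \<Rightarrow> (nat \<Rightarrow> 'b)" where
  "UP_map h p = (\<lambda>n. h (p n))"

lemma coeff_UP: "p \<in> carrier (UP R) \<Longrightarrow> coeff (UP R) p n = p n"
  by (simp add: UP_def)

lemma UP_map_closed:
  assumes h: "h \<in> ring_hom R S" and R: "ring R" and S: "ring S" and p: "p \<in> carrier (UP R)"
  shows "UP_map h p \<in> carrier (UP S)"
proof -
  interpret hh: ring_hom_ring R S h using h R S by (intro ring_hom_ringI2)
  from p obtain n where n: "bound \<zero>\<^bsub>R\<^esub> n p" and pc: "\<And>i. p i \<in> carrier R"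
    by (auto simp: UP_def up_def Pi_def)
  have "bound \<zero>\<^bsub>S\<^esub> n (UP_map h p)"
    using n by (auto simp: UP_map_def bound_def)
  then show ?thesis using pc by (auto simp: UP_def up_def UP_map_def Pi_def)
qed

lemma UP_map_hom:
  assumes R: "cring R" and S: "cring S" and h: "h \<in> ring_hom R S"
  shows "UP_map h \<in> ring_hom (UP R) (UP S)"
proof -
  interpret UR: UP_cring R "UP R" using R by (simp add: UP_cring_def)
  interpret US: UP_cring S "UP S" using S by (simp add: UP_cring_def)
  interpret hh: ring_hom_cring R S h using R S h by (intro ring_hom_cringI ring_hom_ringI2) (auto simp: cring_def)
  have cl: "p \<in> carrier (UP R) \<Longrightarrow> UP_map h p \<in> carrier (UP S)" for p
    using UP_map_closed[OF h] R S by (simp add: cring_def)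
  have cf: "p \<in> carrier (UP R) \<Longrightarrow> coeff (UP S) (UP_map h p) n = h (coeff (UP R) p n)" for p n
    using cl by (simp add: coeff_UP UP_map_def)
  show ?thesis
  proof (rule ring_hom_memI)
    fix p assume "p \<in> carrier (UP R)" then show "UP_map h p \<in> carrier (UP S)" by (rule cl)
  next
    fix p q assume p: "p \<in> carrier (UP R)" and q: "q \<in> carrier (UP R)"
    show "UP_map h (p \<otimes>\<^bsub>UP R\<^esub> q) = UP_map h p \<otimes>\<^bsub>UP S\<^esub> UP_map h q"
    proof (rule US.up_eqI)
      fix n
      have "coeff (UP S) (UP_map h (p \<otimes>\<^bsub>UP R\<^esub> q)) n = h (\<Oplus>\<^bsub>R\<^esub>i \<in> {..n}. coeff (UP R) p i \<otimes>\<^bsub>R\<^esub> coeff (UP R) q (n-i))"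
        using p q by (simp add: cf)
      also have "\<dots> = (\<Oplus>\<^bsub>S\<^esub>i \<in> {..n}. h (coeff (UP R) p i) \<otimes>\<^bsub>S\<^esub> h (coeff (UP R) q (n-i)))"
        using p q by (simp add: Pi_def comp_def)
      also have "\<dots> = coeff (UP S) (UP_map h p \<otimes>\<^bsub>UP S\<^esub> UP_map h q) n"
        using p q cl by (simp add: cf)
      finally show "coeff (UP S) (UP_map h (p \<otimes>\<^bsub>UP R\<^esub> q)) n = coeff (UP S) (UP_map h p \<otimes>\<^bsub>UP S\<^esub> UP_map h q) n" .
    qed (use p q cl in auto)
  next
    fix p q assume p: "p \<in> carrier (UP R)" and q: "q \<in> carrier (UP R)"
    show "UP_map h (p \<oplus>\<^bsub>UP R\<^esub> q) = UP_map h p \<oplus>\<^bsub>UP S\<^esub> UP_map h q"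
      by (rule US.up_eqI) (use p q cl in \<open>simp_all add: cf\<close>)
  next
    show "UP_map h \<one>\<^bsub>UP R\<^esub> = \<one>\<^bsub>UP S\<^esub>"
      by (rule US.up_eqI) (use cl in \<open>simp_all add: cf\<close>)
  qed
qed

lemma UP_map_monom:
  assumes h: "h \<in> ring_hom R S" and R: "ring R" and S: "ring S" and a: "a \<in> carrier R"
  shows "UP_map h (monom (UP R) a n) = monom (UP S) (h a) n"
proof -
  interpret hh: ring_hom_ring R S h using h R S by (intro ring_hom_ringI2)
  show ?thesis using a by (auto simp: UP_def UP_map_def fun_eq_iff)
qed

lemma const2_hom:
  assumes R: "cring R" shows "const2 R \<in> ring_hom R (UP (UP R))"
proof -
  interpret UR: UP_cring R "UP R" using R by (simp add: UP_cring_def)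
  interpret UUR: UP_cring "UP R" "UP (UP R)" using UR.UP_cring by (simp add: UP_cring_def)
  have "(\<lambda>a. monom (UP (UP R)) a 0) \<circ> (\<lambda>c. monom (UP R) c 0) \<in> ring_hom R (UP (UP R))"
    by (rule ring_hom_trans[OF UR.const_ring_hom UUR.const_ring_hom])
  then show ?thesis unfolding const2_def[abs_def] by (simp add: comp_def)
qed

lemma UP_map_UP_map_const2:
  assumes R: "cring R" and S: "cring S" and h: "h \<in> ring_hom R S" and r: "r \<in> carrier R"
  shows "UP_map (UP_map h) (const2 R r) = const2 S (h r)"
proof -
  interpret UR: UP_cring R "UP R" using R by (simp add: UP_cring_def)
  interpret US: UP_cring S "UP S" using S by (simp add: UP_cring_def)
  show ?thesis unfolding const2_def
    using UP_map_monom[OF UP_map_hom[OF R S h] UR.UP_ring US.UP_ring]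
      UP_map_monom[OF h cring.axioms(1)[OF R] cring.axioms(1)[OF S]] r
    by simp
qed

lemma UP_map_UP_map_shift:
  assumes R: "cring R" and S: "cring S" and h: "h \<in> ring_hom R S"
  shows "UP_map (UP_map h) (indet_V R \<oplus>\<^bsub>UP (UP R)\<^esub> indet_U R) = indet_V S \<oplus>\<^bsub>UP (UP S)\<^esub> indet_U S"
proof -
  interpret UR: UP_cring R "UP R" using R by (simp add: UP_cring_def)
  interpret US: UP_cring S "UP S" using S by (simp add: UP_cring_def)
  interpret UUR: UP_cring "UP R" "UP (UP R)" using UR.UP_cring by (simp add: UP_cring_def)
  have h1: "UP_map h \<in> ring_hom (UP R) (UP S)" by (rule UP_map_hom[OF R S h])
  note mono1 = UP_map_monom[OF h cring.axioms(1)[OF R] cring.axioms(1)[OF S]]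
  note mono2 = UP_map_monom[OF h1 UR.UP_ring US.UP_ring]
  have "UP_map (UP_map h) (indet_V R) = indet_V S"
    unfolding indet_V_def using mono1 mono2 ring_hom_one[OF h] by simp
  moreover have "UP_map (UP_map h) (indet_U R) = indet_U S"
    unfolding indet_U_def using mono2[of "\<one>\<^bsub>UP R\<^esub>" 1] ring_hom_one[OF h1] by simp
  ultimately show ?thesis
    using ring_hom_add[OF UP_map_hom[OF UR.UP_cring US.UP_cring h1], of "indet_V R" "indet_U R"]
    unfolding indet_V_def indet_U_def by simp
qed

lemma UP_map_eval_shift:
  assumes R: "cring R" and S: "cring S" and h: "h \<in> ring_hom R S" and p: "p \<in> carrier (UP R)"
  shows "UP_map (UP_map h) (eval R (UP (UP R)) (const2 R) (indet_V R \<oplus>\<^bsub>UP (UP R)\<^esub> indet_U R) p)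
       = eval S (UP (UP S)) (const2 S) (indet_V S \<oplus>\<^bsub>UP (UP S)\<^esub> indet_U S) (UP_map h p)"
    (is "UP_map (UP_map h) (eval R _ _ ?sR p) = eval S _ _ ?sS (UP_map h p)")
proof -
  interpret UR: UP_cring R "UP R" using R by (simp add: UP_cring_def)
  interpret US: UP_cring S "UP S" using S by (simp add: UP_cring_def)
  interpret UUR: UP_cring "UP R" "UP (UP R)" using UR.UP_cring by (simp add: UP_cring_def)
  interpret UUS: UP_cring "UP S" "UP (UP S)" using US.UP_cring by (simp add: UP_cring_def)
  interpret ER: UP_pre_univ_prop R "UP (UP R)" "const2 R" "UP R"
    by (rule UP_pre_univ_propI[OF R UUR.UP_cring const2_hom[OF R]])
  interpret ES: UP_pre_univ_prop S "UP (UP S)" "const2 S" "UP S"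
    by (rule UP_pre_univ_propI[OF S UUS.UP_cring const2_hom[OF S]])
  have hS: "(\<lambda>r. const2 S (h r)) \<in> ring_hom R (UP (UP S))"
    using ring_hom_trans[OF h const2_hom[OF S]] by (simp add: comp_def)
  interpret U: UP_pre_univ_prop R "UP (UP S)" "\<lambda>r. const2 S (h r)" "UP R"
    by (rule UP_pre_univ_propI[OF R UUS.UP_cring hS])
  have sR: "?sR \<in> carrier (UP (UP R))" and sS: "?sS \<in> carrier (UP (UP S))"
    unfolding indet_V_def indet_U_def by simp_all
  have h1: "UP_map h \<in> ring_hom (UP R) (UP S)" by (rule UP_map_hom[OF R S h])
  have h2: "UP_map (UP_map h) \<in> ring_hom (UP (UP R)) (UP (UP S))"
    by (rule UP_map_hom[OF UR.UP_cring US.UP_cring h1])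
  have lhs: "(\<lambda>p. UP_map (UP_map h) (eval R (UP (UP R)) (const2 R) ?sR p)) \<in> ring_hom (UP R) (UP (UP S))"
    using ring_hom_trans[OF ER.eval_ring_hom[OF sR] h2] by (simp add: comp_def)
  have rhs: "(\<lambda>p. eval S (UP (UP S)) (const2 S) ?sS (UP_map h p)) \<in> ring_hom (UP R) (UP (UP S))"
    using ring_hom_trans[OF h1 ES.eval_ring_hom[OF sS]] by (simp add: comp_def)
  show ?thesis
  proof (rule U.UP_hom_unique[OF U.ring_homD[OF lhs] _ _ U.ring_homD[OF rhs] _ _ p sS])
    note mono = UP_map_monom[OF h cring.axioms(1)[OF R] cring.axioms(1)[OF S]]
    show "UP_map (UP_map h) (eval R (UP (UP R)) (const2 R) ?sR (monom (UP R) \<one>\<^bsub>R\<^esub> (Suc 0))) = ?sS"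
      using ER.eval_monom1[OF sR] UP_map_UP_map_shift[OF R S h] by simp
    show "eval S (UP (UP S)) (const2 S) ?sS (UP_map h (monom (UP R) \<one>\<^bsub>R\<^esub> (Suc 0))) = ?sS"
      using ES.eval_monom1[OF sS] mono[of "\<one>\<^bsub>R\<^esub>" 1] ring_hom_one[OF h] by simp
    fix r assume r: "r \<in> carrier R"
    show "UP_map (UP_map h) (eval R (UP (UP R)) (const2 R) ?sR (monom (UP R) r 0)) = const2 S (h r)"
      using ER.eval_const[OF sR r] UP_map_UP_map_const2[OF R S h r] by simp
    show "eval S (UP (UP S)) (const2 S) ?sS (UP_map h (monom (UP R) r 0)) = const2 S (h r)"
      using ES.eval_const[OF sS] mono[OF r, of 0] ring_hom_closed[OF h r] by simp
  qed
qed

section \<open>Exponential maps on quotients\<close>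

lemma ring_hom_factor_through_surj:
  assumes R: "ring R" and \<pi>: "\<pi> \<in> ring_hom R S" "\<pi> ` carrier R = carrier S"
    and F: "F \<in> ring_hom R T" and \<psi>: "\<And>x. x \<in> carrier R \<Longrightarrow> \<psi> (\<pi> x) = F x"
  shows "\<psi> \<in> ring_hom S T"
proof (rule ring_hom_memI)
  fix x assume "x \<in> carrier S"
  then obtain a where "a \<in> carrier R" "x = \<pi> a" using \<pi>(2) by blast
  then show "\<psi> x \<in> carrier T" using \<psi> ring_hom_closed[OF F] by simp
next
  fix x y assume "x \<in> carrier S" "y \<in> carrier S"
  then obtain a b where a: "a \<in> carrier R" "x = \<pi> a" and b: "b \<in> carrier R" "y = \<pi> b"
    using \<pi>(2) by (metis imageE)
  have "\<psi> (x \<otimes>\<^bsub>S\<^esub> y) = \<psi> (\<pi> (a \<otimes>\<^bsub>R\<^esub> b))" using a b ring_hom_mult[OF \<pi>(1)] by simp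
  also have "\<dots> = \<psi> x \<otimes>\<^bsub>T\<^esub> \<psi> y" using a b \<psi> ring_hom_mult[OF F] ring.ring_simprules(5)[OF R] by simp
  finally show "\<psi> (x \<otimes>\<^bsub>S\<^esub> y) = \<psi> x \<otimes>\<^bsub>T\<^esub> \<psi> y" .
  have "\<psi> (x \<oplus>\<^bsub>S\<^esub> y) = \<psi> (\<pi> (a \<oplus>\<^bsub>R\<^esub> b))" using a b ring_hom_add[OF \<pi>(1)] by simp
  also have "\<dots> = \<psi> x \<oplus>\<^bsub>T\<^esub> \<psi> y" using a b \<psi> ring_hom_add[OF F] ring.ring_simprules(1)[OF R] by simp
  finally show "\<psi> (x \<oplus>\<^bsub>S\<^esub> y) = \<psi> x \<oplus>\<^bsub>T\<^esub> \<psi> y" .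
next
  show "\<psi> \<one>\<^bsub>S\<^esub> = \<one>\<^bsub>T\<^esub>"
    using \<psi>[OF ring.ring_simprules(6)[OF R]] ring_hom_one[OF \<pi>(1)] ring_hom_one[OF F] by simp
qed

lemma exp_map_shift_UP_map:
  assumes R: "cring R" and S: "cring S" and \<pi>: "\<pi> \<in> ring_hom R S"
    and E: "exp_map R K \<phi>" and \<psi>: "\<And>b. b \<in> carrier R \<Longrightarrow> \<psi> (\<pi> b) = UP_map \<pi> (\<phi> b)"
    and b: "b \<in> carrier R"
  shows "(\<lambda>n. \<psi> (coeff (UP S) (\<psi> (\<pi> b)) n))
    = eval S (UP (UP S)) (const2 S) (indet_V S \<oplus>\<^bsub>UP (UP S)\<^esub> indet_U S) (\<psi> (\<pi> b))"
proof -
  interpret UR: UP_cring R "UP R" using R by (simp add: UP_cring_def)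
  have \<phi>b: "\<phi> b \<in> carrier (UP R)" using E b unfolding exp_map_def by (auto intro: ring_hom_closed)
  then have "coeff (UP S) (\<psi> (\<pi> b)) n = \<pi> (coeff (UP R) (\<phi> b) n)" for n
    using \<psi>[OF b] ring_hom_closed[OF UP_map_hom[OF R S \<pi>] \<phi>b] by (simp add: coeff_UP UP_map_def)
  then have "(\<lambda>n. \<psi> (coeff (UP S) (\<psi> (\<pi> b)) n)) = UP_map (UP_map \<pi>) (\<lambda>n. \<phi> (coeff (UP R) (\<phi> b) n))"
    using \<psi> \<phi>b by (simp add: UP_map_def)
  also have "\<dots> = UP_map (UP_map \<pi>)
      (eval R (UP (UP R)) (const2 R) (indet_V R \<oplus>\<^bsub>UP (UP R)\<^esub> indet_U R) (\<phi> b))"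
    using E b unfolding exp_map_def by simp
  also have "\<dots> = eval S (UP (UP S)) (const2 S) (indet_V S \<oplus>\<^bsub>UP (UP S)\<^esub> indet_U S) (\<psi> (\<pi> b))"
    using UP_map_eval_shift[OF R S \<pi> \<phi>b] \<psi>[OF b] by simp
  finally show ?thesis .
qed

lemma exp_map_surj_hom_image:
  assumes R: "cring R" and S: "cring S" and \<pi>: "\<pi> \<in> ring_hom R S" "\<pi> ` carrier R = carrier S"
    and E: "exp_map R K \<phi>" and KR: "K \<subseteq> carrier R"
    and \<psi>: "\<And>b. b \<in> carrier R \<Longrightarrow> \<psi> (\<pi> b) = UP_map \<pi> (\<phi> b)"
  shows "exp_map S (\<pi> ` K) \<psi>"
proof -
  have \<phi>: "\<phi> \<in> ring_hom R (UP R)" using E unfolding exp_map_def by blast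
  have \<Pi>: "UP_map \<pi> \<in> ring_hom (UP R) (UP S)" by (rule UP_map_hom[OF R S \<pi>(1)])
  show ?thesis
    unfolding exp_map_def
  proof (intro conjI ballI)
    have "(\<lambda>b. UP_map \<pi> (\<phi> b)) \<in> ring_hom R (UP S)"
      using ring_hom_trans[OF \<phi> \<Pi>] by (simp add: comp_def)
    then show "\<psi> \<in> ring_hom S (UP S)"
      using ring_hom_factor_through_surj[OF cring.axioms(1)[OF R] \<pi>] \<psi> by blast
  next
    fix c assume "c \<in> \<pi> ` K"
    then obtain k where k: "k \<in> K" "c = \<pi> k" by blast
    then show "\<psi> c = monom (UP S) c 0"
      using \<psi> KR E UP_map_monom[OF \<pi>(1) cring.axioms(1)[OF R] cring.axioms(1)[OF S]]
      unfolding exp_map_def by auto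
  next
    fix c assume "c \<in> carrier S"
    then obtain b where b: "b \<in> carrier R" "c = \<pi> b" using \<pi>(2) by blast
    then show "coeff (UP S) (\<psi> c) 0 = c"
      using \<psi>[OF b(1)] E ring_hom_closed[OF \<Pi>] ring_hom_closed[OF \<phi>]
      unfolding exp_map_def by (simp add: coeff_UP UP_map_def)
  next
    fix c assume "c \<in> carrier S"
    then obtain b where "b \<in> carrier R" "c = \<pi> b" using \<pi>(2) by blast
    then show "(\<lambda>n. \<psi> (coeff (UP S) (\<psi> c) n))
        = eval S (UP (UP S)) (const2 S) (indet_V S \<oplus>\<^bsub>UP (UP S)\<^esub> indet_U S) (\<psi> c)"
      using exp_map_shift_UP_map[OF R S \<pi>(1) E \<psi>] by simp
  qed
qed

lemma exp_map_nonconstant_coeff: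
  assumes E: "exp_map R K \<phi>" and b: "b \<in> carrier R" and nonfixed: "b \<notin> invariants R \<phi>"
  shows "\<exists>n. n \<noteq> 0 \<and> coeff (UP R) (\<phi> b) n \<noteq> \<zero>\<^bsub>R\<^esub>"
proof (rule ccontr)
  assume "\<not> ?thesis"
  then have high: "coeff (UP R) (\<phi> b) n = \<zero>\<^bsub>R\<^esub>" if "n \<noteq> 0" for n using that by blast
  have "\<phi> b \<in> carrier (UP R)" "coeff (UP R) (\<phi> b) 0 = b"
    using E b unfolding exp_map_def by (auto intro: ring_hom_closed)
  then have "\<phi> b n = (if n = 0 then b else \<zero>\<^bsub>R\<^esub>)" for n
    using high[of n] by (simp add: coeff_UP)
  then have "\<phi> b = monom (UP R) b 0" using b by (simp add: UP_def fun_eq_iff)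
  then show False using nonfixed b unfolding invariants_def by blast
qed

lemma (in cring) invariants_minus:
  assumes \<phi>: "\<phi> \<in> ring_hom R (UP R)" and a: "a \<in> invariants R \<phi>" and b: "b \<in> invariants R \<phi>"
  shows "a \<ominus> b \<in> invariants R \<phi>"
proof -
  interpret UR: UP_cring R "UP R" using is_cring by (simp add: UP_cring_def)
  interpret \<phi>: ring_hom_cring R "UP R" \<phi> by (rule ring_hom_cringI[OF is_cring UR.UP_cring \<phi>])
  show ?thesis using a b unfolding invariants_def minus_eq by (simp add: UR.minus_eq)
qed

lemma (in cring) PIdl_invariant_stable:
  assumes \<phi>: "\<phi> \<in> ring_hom R (UP R)" and p: "p \<in> invariants R \<phi>" and i: "i \<in> PIdl p"
  shows "up_ring.coeff (UP R) (\<phi> i) n \<in> PIdl p"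
proof -
  interpret UR: UP_cring R "UP R" using is_cring by (simp add: UP_cring_def)
  interpret \<phi>: ring_hom_cring R "UP R" \<phi> by (rule ring_hom_cringI[OF is_cring UR.UP_cring \<phi>])
  have p: "p \<in> carrier R" "\<phi> p = up_ring.monom (UP R) p 0" using p unfolding invariants_def by auto
  obtain x where x: "x \<in> carrier R" "i = x \<otimes> p" using i unfolding cgenideal_def by blast
  have "\<phi> i = up_ring.monom (UP R) p 0 \<otimes>\<^bsub>UP R\<^esub> \<phi> x" using x p by (simp add: UR.m_comm)
  then have "up_ring.coeff (UP R) (\<phi> i) n = p \<otimes> up_ring.coeff (UP R) (\<phi> x) n"
    using x p UR.coeff_monom_mult[of p "\<phi> x" 0 n] by simp
  also have "\<dots> = up_ring.coeff (UP R) (\<phi> x) n \<otimes> p" using x(1) p(1) by (simp add: m_comm)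
  finally show ?thesis using x(1) unfolding cgenideal_def by auto
qed

text \<open>The map is evaluated at an arbitrary representative of the coset; by \<open>quot_exp_map_rcos\<close> the
  choice does not matter as soon as \<open>\<phi>\<close> maps \<open>I\<close> into \<open>I[U]\<close>.\<close>
definition quot_exp_map :: "('a, 'm) ring_scheme \<Rightarrow> 'a set \<Rightarrow> ('a \<Rightarrow> nat \<Rightarrow> 'a) \<Rightarrow> 'a set \<Rightarrow> nat \<Rightarrow> 'a set"
  where "quot_exp_map R I \<phi> C = UP_map (\<lambda>x. I +>\<^bsub>R\<^esub> x) (\<phi> (SOME b. b \<in> C))"

lemma (in cring) quot_exp_map_rcos:
  assumes I: "ideal I R" and \<phi>: "\<phi> \<in> ring_hom R (UP R)"
    and stable: "\<And>i n. i \<in> I \<Longrightarrow> up_ring.coeff (UP R) (\<phi> i) n \<in> I" and b: "b \<in> carrier R"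
  shows "quot_exp_map R I \<phi> (I +> b) = UP_map (\<lambda>x. I +> x) (\<phi> b)"
proof -
  interpret I: ideal I R by (rule I)
  interpret UR: UP_cring R "UP R" using is_cring by (simp add: UP_cring_def)
  interpret \<phi>: ring_hom_cring R "UP R" \<phi> by (rule ring_hom_cringI[OF is_cring UR.UP_cring \<phi>])
  define b' where "b' = (SOME b'. b' \<in> I +> b)"
  have "b' \<in> I +> b" using I.a_rcos_self[OF b] unfolding b'_def by (rule someI)
  then have b': "b' \<in> carrier R" "b' \<ominus> b \<in> I"
    using I.a_elemrcos_carrier[OF b] I.a_rcos_module_minus[OF ring_axioms b] by auto
  have "\<phi> b' \<ominus>\<^bsub>UP R\<^esub> \<phi> b = \<phi> (b' \<ominus> b)"
    using b b' by (simp add: a_minus_def)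
  then have "up_ring.coeff (UP R) (\<phi> b') n \<ominus> up_ring.coeff (UP R) (\<phi> b) n \<in> I" for n
    using stable[OF b'(2)] b b' by (metis UR.coeff_minus \<phi>.hom_closed)
  then have "I +> up_ring.coeff (UP R) (\<phi> b') n = I +> up_ring.coeff (UP R) (\<phi> b) n" for n
    using quotient_eq_iff_same_a_r_cos[OF I] b b' by simp
  then show ?thesis unfolding quot_exp_map_def UP_map_def b'_def[symmetric] using b b' by (simp add: coeff_UP)
qed

lemma (in cring) exp_map_quot:
  assumes E: "exp_map R K \<phi>" and KR: "K \<subseteq> carrier R" and I: "ideal I R"
    and stable: "\<And>i n. i \<in> I \<Longrightarrow> up_ring.coeff (UP R) (\<phi> i) n \<in> I"
  shows "exp_map (R Quot I) ((\<lambda>c. I +> c) ` K) (quot_exp_map R I \<phi>)"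
proof (rule exp_map_surj_hom_image[OF is_cring _ _ _ E KR])
  interpret I: ideal I R by (rule I)
  show "cring (R Quot I)" by (rule I.quotient_is_cring[OF is_cring])
  show "(\<lambda>c. I +> c) \<in> ring_hom R (R Quot I)" by (rule I.rcos_ring_hom)
  show "(\<lambda>c. I +> c) ` carrier R = carrier (R Quot I)" by (auto simp: FactRing_def A_RCOSETS_def')
  show "quot_exp_map R I \<phi> (I +> b) = UP_map (\<lambda>c. I +> c) (\<phi> b)" if "b \<in> carrier R" for b
    using quot_exp_map_rcos[OF I conjunct1[OF E[unfolded exp_map_def]] stable that] .
qed

lemma (in cring) nontrivial_quot_exp_map:
  assumes I: "ideal I R" and \<phi>: "\<phi> \<in> ring_hom R (UP R)"
    and stable: "\<And>i n. i \<in> I \<Longrightarrow> up_ring.coeff (UP R) (\<phi> i) n \<in> I"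
    and b: "b \<in> carrier R" and n: "n \<noteq> 0" "up_ring.coeff (UP R) (\<phi> b) n \<notin> I"
  shows "nontrivial_exp (R Quot I) (quot_exp_map R I \<phi>)"
proof -
  interpret UR: UP_cring R "UP R" using is_cring by (simp add: UP_cring_def)
  interpret I: ideal I R by (rule I)
  have bQ: "I +> b \<in> carrier (R Quot I)" using b by (auto simp: FactRing_def A_RCOSETS_def')
  have c: "up_ring.coeff (UP R) (\<phi> b) n \<in> carrier R" using ring_hom_closed[OF \<phi> b] by simp
  have "I +> b \<notin> invariants (R Quot I) (quot_exp_map R I \<phi>)"
  proof
    assume "I +> b \<in> invariants (R Quot I) (quot_exp_map R I \<phi>)"
    then have "quot_exp_map R I \<phi> (I +> b) = up_ring.monom (UP (R Quot I)) (I +> b) 0"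
      unfolding invariants_def by blast
    then have "UP_map (\<lambda>x. I +> x) (\<phi> b) n = up_ring.monom (UP (R Quot I)) (I +> b) 0 n"
      using quot_exp_map_rcos[OF I \<phi> stable b] by simp
    moreover have "up_ring.monom (UP (R Quot I)) (I +> b) 0 n = I"
      using n(1) bQ by (simp add: UP_def FactRing_def)
    moreover have "UP_map (\<lambda>x. I +> x) (\<phi> b) n = I +> up_ring.coeff (UP R) (\<phi> b) n"
      using ring_hom_closed[OF \<phi> b] by (simp add: UP_map_def coeff_UP)
    ultimately have "I +> up_ring.coeff (UP R) (\<phi> b) n = I" by simp
    then show False using I.rcos_const_imp_mem[OF c] n(2) by simp
  qed
  then show ?thesis unfolding nontrivial_exp_def using bQ by blast
qed

lemma (in cring) exp_map_quot_PIdl: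
  assumes E: "exp_map R K \<phi>" and KR: "K \<subseteq> carrier R" and p: "p \<in> invariants R \<phi>"
    and b: "b \<in> carrier R" and n: "n \<noteq> 0" "\<not> p divides up_ring.coeff (UP R) (\<phi> b) n"
  shows "\<exists>\<phi>1. exp_map (R Quot PIdl p) ((\<lambda>c. PIdl p +> c) ` K) \<phi>1 \<and> nontrivial_exp (R Quot PIdl p) \<phi>1 \<and>
    (\<forall>b\<in>carrier R. \<phi>1 (PIdl p +> b) = (\<lambda>n. PIdl p +> up_ring.coeff (UP R) (\<phi> b) n))"
proof (intro exI conjI ballI)
  have \<phi>: "\<phi> \<in> ring_hom R (UP R)" using E unfolding exp_map_def by blast
  have I: "ideal (PIdl p) R" using p cgenideal_ideal unfolding invariants_def by blast
  note stable = PIdl_invariant_stable[OF \<phi> p]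
  have "up_ring.coeff (UP R) (\<phi> b) n \<notin> PIdl p"
  proof
    assume "up_ring.coeff (UP R) (\<phi> b) n \<in> PIdl p"
    then obtain x where "x \<in> carrier R" "up_ring.coeff (UP R) (\<phi> b) n = x \<otimes> p"
      unfolding cgenideal_def by blast
    then show False using n(2) p m_comm unfolding factor_def invariants_def by auto
  qed
  show "exp_map (R Quot PIdl p) ((\<lambda>c. PIdl p +> c) ` K) (quot_exp_map R (PIdl p) \<phi>)"
    by (rule exp_map_quot[OF E KR I stable])
  show "nontrivial_exp (R Quot PIdl p) (quot_exp_map R (PIdl p) \<phi>)"
    by (rule nontrivial_quot_exp_map[OF I \<phi> stable b n(1) \<open>_ \<notin> PIdl p\<close>])
  fix b assume "b \<in> carrier R"
  then show "quot_exp_map R (PIdl p) \<phi> (PIdl p +> b) = (\<lambda>n. PIdl p +> up_ring.coeff (UP R) (\<phi> b) n)"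
    using quot_exp_map_rcos[OF I \<phi> stable] ring_hom_closed[OF \<phi>] by (simp add: UP_map_def coeff_UP)
qed

theorem lemma3p3:
  fixes R :: "('a, 'm) ring_scheme" and K :: "'a set"
    and \<phi> :: "'a \<Rightarrow> nat \<Rightarrow> 'a" and f :: 'a
  assumes "affine_domain R K"
    and "infinite K"
    and "f \<in> carrier R"
    and "infinite {l \<in> K. ring_prime\<^bsub>R\<^esub> (f \<ominus>\<^bsub>R\<^esub> l)}"
    and "exp_map R K \<phi>"
    and "nontrivial_exp R \<phi>"
    and "f \<in> invariants R \<phi>"
  shows "\<exists>\<beta>\<in>K. ring_prime\<^bsub>R\<^esub> (f \<ominus>\<^bsub>R\<^esub> \<beta>) \<and>
           (let I = PIdl\<^bsub>R\<^esub> (f \<ominus>\<^bsub>R\<^esub> \<beta>) in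
            \<exists>\<phi>1. exp_map (R Quot I) ((\<lambda>c. I +>\<^bsub>R\<^esub> c) ` K) \<phi>1 \<and>
                 nontrivial_exp (R Quot I) \<phi>1 \<and>
                 (\<forall>b\<in>carrier R. \<phi>1 (I +>\<^bsub>R\<^esub> b) = (\<lambda>n. I +>\<^bsub>R\<^esub> coeff (UP R) (\<phi> b) n)))"
proof -
  interpret R: noetherian_domain R by (rule affine_domain_noetherian[OF assms(1)])
  have K: "subfield K R" using assms(1) unfolding affine_domain_def by blast
  have KR: "K \<subseteq> carrier R" using subringE(1)[OF subfieldE(1)[OF K]] .
  have \<phi>: "\<phi> \<in> ring_hom R (UP R)" using assms(5) unfolding exp_map_def by blast
  obtain b where b: "b \<in> carrier R" "b \<notin> invariants R \<phi>"
    using assms(6) unfolding nontrivial_exp_def invariants_def by blast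
  obtain n where n: "n \<noteq> 0" "coeff (UP R) (\<phi> b) n \<noteq> \<zero>\<^bsub>R\<^esub>"
    using exp_map_nonconstant_coeff[OF assms(5) b] by blast
  let ?c = "coeff (UP R) (\<phi> b) n"
  have c: "?c \<in> carrier R" using ring_hom_closed[OF \<phi> b(1)] by (simp add: coeff_UP UP_def up_def Pi_def)
  have "finite {l \<in> K. ring_prime\<^bsub>R\<^esub> (f \<ominus>\<^bsub>R\<^esub> l) \<and> (f \<ominus>\<^bsub>R\<^esub> l) divides\<^bsub>R\<^esub> ?c}"
    by (rule R.finite_linear_prime_divisors[OF K assms(3) c n(2)])
  then obtain \<beta> where \<beta>: "\<beta> \<in> K" "ring_prime\<^bsub>R\<^esub> (f \<ominus>\<^bsub>R\<^esub> \<beta>)" "\<not> (f \<ominus>\<^bsub>R\<^esub> \<beta>) divides\<^bsub>R\<^esub> ?c"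
    using Diff_infinite_finite[OF _ assms(4)] infinite_imp_nonempty by blast
  have "f \<ominus>\<^bsub>R\<^esub> \<beta> \<in> invariants R \<phi>"
    using R.invariants_minus[OF \<phi> assms(7)] assms(5) \<beta>(1) KR unfolding exp_map_def invariants_def by auto
  then show ?thesis
    using \<beta> R.exp_map_quot_PIdl[OF assms(5) KR _ b(1) n(1)] unfolding Let_def by blast
qed

end
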